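(* Let $B=\mathrm{GF}(p^m)$ and $F=\mathrm{GF}(p^{mt})$ and assume $t$ is divisible by $p$. Let $\alpha^*\neq\overline{\alpha}$ be elements of $F$, and let $K_{\alpha^*,\overline{\alpha}}=\{z\in F:\mathrm{Tr}_{F/B}(z(\overline{\alpha}-\alpha^* ))=0\}$, a $B$-subspace of dimension $t-1$. Let $\{u_1,\dots,u_{t-1}\}$ and $\{v_1,\dots,v_{t-1}\}$ be two bases of $K_{\alpha^*,\overline{\alpha}}$ over $B$, completed to bases $\{u_1,\dots,u_t\}$ and $\{v_1,\dots,v_t\}$ of $F$ over $B$. For $i\in[t]$ set $p_i(x)=\dfrac{\mathrm{Tr}_{F/B}(u_i(x-\alpha^* ))}{x-\alpha^*}$ and $q_i(x)=\dfrac{\mathrm{Tr}_{F/B}(v_i(x-\overline{\alpha}))}{x-\overline{\alpha}}$. Then $p_t(\overline{\alpha})$ lies in the $B$-span of $\{q_i(\overline{\alpha}):i\in[t-1]\}$, and $q_t(\alpha^* )$ lies in the $B$-span of $\{p_i(\alpha^* ):i\in[t-1]\}$.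
   Context: $\mathrm{Tr}_{F/B}(x)=\sum_{i=0}^{t-1}x^{|B|^i}$ is the field trace; $[t]=\{1,\dots,t\}$. "Dependent over $B$" means lying in the $B$-linear span. *)

theory Defs
  imports "HOL-Computational_Algebra.Polynomial"
begin

text \<open>The finite field F is modelled as a finite field type 'a with CARD('a) = p^(m*t).
  The subfield B = GF(p^m) is the set of fixed points of x \<mapsto> x^(p^m), where q = p^m.\<close>

definition subB :: "nat \<Rightarrow> 'a::field set" where
  "subB q = {x. x ^ q = x}"

definition trFB :: "nat \<Rightarrow> nat \<Rightarrow> 'a::field \<Rightarrow> 'a" where
  "trFB q t x = (\<Sum>i<t. x ^ (q ^ i))"

definition Bspan :: "nat \<Rightarrow> 'i set \<Rightarrow> ('i \<Rightarrow> 'a::field) \<Rightarrow> 'a set" where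
  "Bspan q I w = {y. \<exists>c. (\<forall>i\<in>I. c i \<in> subB q) \<and> y = (\<Sum>i\<in>I. c i * w i)}"

definition Bindep :: "nat \<Rightarrow> 'i set \<Rightarrow> ('i \<Rightarrow> 'a::field) \<Rightarrow> bool" where
  "Bindep q I w = (\<forall>c. (\<forall>i\<in>I. c i \<in> subB q) \<longrightarrow> (\<Sum>i\<in>I. c i * w i) = 0 \<longrightarrow> (\<forall>i\<in>I. c i = 0))"

definition Bbasis :: "nat \<Rightarrow> 'i set \<Rightarrow> ('i \<Rightarrow> 'a::field) \<Rightarrow> 'a set \<Rightarrow> bool" where
  "Bbasis q I w V = ((\<forall>i\<in>I. w i \<in> V) \<and> Bindep q I w \<and> Bspan q I w = V)"

text \<open>The polynomial Tr_{F/B}(w (x - a)) in x, i.e. sum_{i<t} w^(q^i) (x - a)^(q^i),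
  and the rational function Tr_{F/B}(w (x - a)) / (x - a), which is a polynomial
  (exact polynomial division by x - a).\<close>
definition trpoly :: "nat \<Rightarrow> nat \<Rightarrow> 'a::field \<Rightarrow> 'a \<Rightarrow> 'a poly" where
  "trpoly q t w a = (\<Sum>i<t. smult (w ^ (q ^ i)) ([:- a, 1:] ^ (q ^ i)))"

definition trquot :: "nat \<Rightarrow> nat \<Rightarrow> 'a::field \<Rightarrow> 'a \<Rightarrow> 'a poly" where
  "trquot q t w a = trpoly q t w a div [:- a, 1:]"

end

theory Submission
  imports Defs "HOL-Number_Theory.Residues"
begin

text \<open>At its own pole a, the quotient \<open>Tr(w(x - a))/(x - a)\<close> takes the value w, so the values
  \<open>p\<^sub>i(\<alpha>\<^sup>*)\<close> and \<open>q\<^sub>i(\<overline>\<alpha>)\<close> are just the basis vectors \<open>u\<^sub>i\<close> and \<open>v\<^sub>i\<close>, and both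
  spans in question are the kernel K. At the other point b, the quotient equals \<open>c/(b - a)\<close>
  with \<open>c = Tr(w(b - a)) \<in> B\<close>; multiplying back by \<open>b - a\<close> gives \<open>Tr(c) = t c = 0\<close>,
  because the characteristic p divides t. Since the trace is odd, swapping a and b
  does not change the kernel K. Hence \<open>p\<^sub>t(\<overline>\<alpha>)\<close> and \<open>q\<^sub>t(\<alpha>\<^sup>*)\<close> both lie in K.\<close>

lemma power_card_UNIV_eq_self:
  fixes x :: "'a::{field,finite}"
  shows "x ^ card (UNIV :: 'a set) = x"
proof (cases "x = 0")
  case True
  then show ?thesis by (simp add: finite_UNIV_card_ge_0)
next
  case False
  define G where "G = (\<lparr>carrier = UNIV - {0::'a}, monoid.mult = (*), one = 1\<rparr> :: 'a monoid)"
  have "group G"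
  proof (rule groupI)
    show "\<exists>y\<in>carrier G. y \<otimes>\<^bsub>G\<^esub> z = \<one>\<^bsub>G\<^esub>" if "z \<in> carrier G" for z
      using that by (intro bexI[of _ "inverse z"]) (auto simp: G_def)
  qed (auto simp: G_def mult.assoc)
  then have "x [^]\<^bsub>G\<^esub> order G = \<one>\<^bsub>G\<^esub>"
    by (rule group.pow_order_eq_1) (simp add: G_def False)
  moreover have "y [^]\<^bsub>G\<^esub> n = y ^ n" for y :: 'a and n :: nat
    by (induction n) (simp_all add: G_def)
  ultimately have "x ^ order G = 1"
    by (simp add: G_def)
  moreover have "order G = card (UNIV :: 'a set) - 1"
    by (simp add: order_def G_def card_Diff_singleton)
  ultimately have "x ^ (card (UNIV :: 'a set) - 1) = 1"
    by simp
  moreover have "card (UNIV :: 'a set) = Suc (card (UNIV :: 'a set) - 1)"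
    using finite_UNIV_card_ge_0[where ?'a = 'a] by simp
  ultimately show ?thesis
    by (metis mult.right_neutral power_Suc)
qed

lemma CHAR_eq_if_card_prime_power:
  fixes p k :: nat
  assumes "prime p" and "card (UNIV :: 'a::{field,finite} set) = p ^ k"
  shows "CHAR('a) = p"
proof -
  have "prime CHAR('a)"
    by (rule prime_CHAR_semidom) (simp add: finite_imp_CHAR_pos)
  moreover have "CHAR('a) dvd p ^ k"
    using CHAR_dvd_CARD[where 'a = 'a] assms(2) by simp
  ultimately show ?thesis
    using assms(1) prime_dvd_power primes_dvd_imp_eq by blast
qed

lemma subB_power_power:
  fixes s :: "'a::field"
  assumes "s \<in> subB q"
  shows "s ^ (q ^ i) = s"
proof (induction i)
  case (Suc i)
  have "s ^ (q ^ Suc i) = (s ^ q) ^ (q ^ i)"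
    by (simp add: power_mult[symmetric] mult.commute)
  then show ?case
    using assms Suc by (simp add: subB_def)
qed simp

lemma trFB_subB:
  fixes s :: "'a::field"
  assumes "s \<in> subB q"
  shows "trFB q t s = of_nat t * s"
  using subB_power_power[OF assms] by (simp add: trFB_def)

lemma trFB_uminus:
  fixes y :: "'a::field"
  assumes "prime CHAR('a)" and "q = CHAR('a) ^ m"
  shows "trFB q t (- y) = - trFB q t y"
proof -
  have "(- y) ^ (q ^ i) = - (y ^ (q ^ i))" for i
  proof -
    have "(- y + y) ^ (q ^ i) = (- y) ^ (q ^ i) + y ^ (q ^ i)"
      by (rule freshmans_dream'[OF assms(1), where n = "m * i"]) (simp add: assms(2) power_mult)
    moreover have "q > 0"
      using assms by (simp add: prime_gt_0_nat)
    ultimately show ?thesis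
      by (simp add: eq_neg_iff_add_eq_0 power_0_left)
  qed
  then show ?thesis
    by (simp add: trFB_def sum_negf)
qed

text \<open>The trace is Frobenius-invariant because the Frobenius map \<open>x \<mapsto> x\<^sup>q\<close> is additive and
  permutes its summands cyclically, using \<open>y ^ q ^ t = y\<close>.\<close>
lemma trFB_in_subB:
  fixes y :: "'a::{field,finite}"
  assumes "prime CHAR('a)" and "q = CHAR('a) ^ m"
    and "card (UNIV :: 'a set) = q ^ t" and "t > 0"
  shows "trFB q t y \<in> subB q"
proof -
  obtain n where t: "t = Suc n"
    using assms(4) by (cases t) auto
  have "trFB q t y ^ q = (\<Sum>i<t. (y ^ (q ^ i)) ^ q)"
    unfolding trFB_def by (rule freshmans_dream_sum'[OF assms(1,2)])
  also have "\<dots> = (\<Sum>i<n. y ^ (q ^ Suc i)) + y ^ (q ^ t)"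
    by (simp add: t power_mult[symmetric] mult.commute)
  also have "y ^ (q ^ t) = y"
    using power_card_UNIV_eq_self[of y] assms(3) by simp
  also have "(\<Sum>i<n. y ^ (q ^ Suc i)) + y = trFB q t y"
    unfolding trFB_def t sum.lessThan_Suc_shift by simp
  finally show ?thesis
    by (simp add: subB_def)
qed

lemma trquot_conv_sum:
  fixes a w :: "'a::field"
  assumes "q > 0"
  shows "trquot q t w a = (\<Sum>i<t. Polynomial.smult (w ^ (q ^ i)) ([:- a, 1:] ^ (q ^ i - 1)))"
proof -
  have "[:- a, 1:] ^ (q ^ i) = [:- a, 1:] * [:- a, 1:] ^ (q ^ i - 1)" for i
    using assms by (simp flip: power_Suc)
  then have "trpoly q t w a = [:- a, 1:] * (\<Sum>i<t. Polynomial.smult (w ^ (q ^ i)) ([:- a, 1:] ^ (q ^ i - 1)))"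
    by (simp add: trpoly_def sum_distrib_left)
  then show ?thesis
    unfolding trquot_def by (metis nonzero_mult_div_cancel_left pCons_eq_0_iff zero_neq_one)
qed

lemma poly_trquot_at_pole:
  fixes a w :: "'a::field"
  assumes "q > 1" and "t > 0"
  shows "poly (trquot q t w a) a = w"
proof -
  have "poly (Polynomial.smult (w ^ (q ^ i)) ([:- a, 1:] ^ (q ^ i - 1))) a = (if i = 0 then w else 0)" for i
    using assms one_less_power[OF assms(1)] by (simp add: poly_power)
  then have "poly (trquot q t w a) a = (\<Sum>i<t. if i = 0 then w else 0)"
    using assms by (simp add: trquot_conv_sum poly_sum)
  then show ?thesis
    using assms by simp
qed

lemma poly_trquot_off_pole:
  fixes a b w :: "'a::field"
  assumes "q > 0" and "b \<noteq> a"
  shows "poly (trquot q t w a) b * (b - a) = trFB q t (w * (b - a))"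
proof -
  have "(b - a) ^ (q ^ i) = (b - a) ^ (q ^ i - 1) * (b - a)" for i
    using assms by (simp flip: power_Suc2)
  then show ?thesis
    using assms by (simp add: trquot_conv_sum trFB_def poly_sum poly_power sum_distrib_right
        power_mult_distrib mult.assoc)
qed

lemma trquot_off_pole_in_trace_kernel:
  fixes a b w :: "'a::{field,finite}"
  assumes "prime CHAR('a)" and "q = CHAR('a) ^ m"
    and "card (UNIV :: 'a set) = q ^ t" and "t > 0" and "CHAR('a) dvd t"
    and "b \<noteq> a"
  shows "trFB q t (poly (trquot q t w a) b * (b - a)) = 0"
proof -
  have "q > 0"
    using assms(1,2) by (simp add: prime_gt_0_nat)
  then have "trFB q t (poly (trquot q t w a) b * (b - a)) = of_nat t * trFB q t (w * (b - a))"
    using poly_trquot_off_pole[OF _ assms(6)] trFB_subB trFB_in_subB[OF assms(1-4)] by metis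
  then show ?thesis
    using assms(5) by (simp add: of_nat_eq_0_iff_char_dvd)
qed

theorem lemma7:
  fixes p m t :: nat and a_star a_bar :: "'a::{field,finite}" and u v :: "nat \<Rightarrow> 'a"
  assumes "prime p" and "m > 0" and "t > 0"
    and "card (UNIV :: 'a set) = p ^ (m * t)"
    and "p dvd t"
    and "a_star \<noteq> a_bar"
    and "Bbasis (p ^ m) {1..t-1} u {z. trFB (p ^ m) t (z * (a_bar - a_star)) = 0}"
    and "Bbasis (p ^ m) {1..t-1} v {z. trFB (p ^ m) t (z * (a_bar - a_star)) = 0}"
    and "Bbasis (p ^ m) {1..t} u UNIV"
    and "Bbasis (p ^ m) {1..t} v UNIV"
  shows "poly (trquot (p ^ m) t (u t) a_star) a_bar
           \<in> Bspan (p ^ m) {1..t-1} (\<lambda>i. poly (trquot (p ^ m) t (v i) a_bar) a_bar)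
     \<and> poly (trquot (p ^ m) t (v t) a_bar) a_star
           \<in> Bspan (p ^ m) {1..t-1} (\<lambda>i. poly (trquot (p ^ m) t (u i) a_star) a_star)"
proof -
  define q where "q = p ^ m"
  have char: "CHAR('a) = p"
    using CHAR_eq_if_card_prime_power[OF assms(1,4)] .
  have q: "q = CHAR('a) ^ m" and card: "card (UNIV :: 'a set) = q ^ t"
    using assms(4) char by (simp_all add: q_def power_mult)
  have "q > 1"
    using one_less_power[OF prime_gt_1_nat[OF assms(1)] assms(2)] by (simp add: q_def)
  note kernel = trquot_off_pole_in_trace_kernel[OF _ q card assms(3), unfolded char]
  have at_pole: "(\<lambda>i. poly (trquot q t (w i) a) a) = w" for w :: "nat \<Rightarrow> 'a" and a
    using poly_trquot_at_pole[OF \<open>q > 1\<close> assms(3)] by auto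
  have "trFB q t (poly (trquot q t (u t) a_star) a_bar * (a_bar - a_star)) = 0"
    using kernel assms(1,5,6) by simp
  moreover have "trFB q t (poly (trquot q t (v t) a_bar) a_star * (a_bar - a_star)) = 0"
  proof -
    have "trFB q t (- (poly (trquot q t (v t) a_bar) a_star * (a_star - a_bar))) = 0"
      using kernel[of a_star a_bar] trFB_uminus[OF _ q] assms(1,5,6) char by simp
    then show ?thesis
      by (simp add: algebra_simps)
  qed
  ultimately show ?thesis
    using assms(7,8) at_pole by (simp add: Bbasis_def q_def)
qed

end
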